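(* Let $\mathcal{C}$ be a simplicial complex on ground set $V$ and $\mathbf{d}=(d_u)_{u\in V}$ with all $d_u\ge2$, and assume $\mathcal{A}_{\mathcal{C},\mathbf{d}}$ is unimodular. Let $v$ be a vertex of $\mathcal{C}$ and let $\mathbf{d}'$ be obtained from $\mathbf{d}$ by deleting the entry $d_v$. Then $\mathcal{A}_{\operatorname{link}_v(\mathcal{C}),\mathbf{d}'}$ is unimodular.
   Context: A simplicial complex on a finite ground set $V$ is a family of subsets of $V$ closed under subsets; facets are inclusion-maximal faces; a vertex $v$ of $\mathcal{C}$ means $\{v\}\in\mathcal{C}$. $\operatorname{link}_v(\mathcal{C})=\{F\setminus\{v\}: v\in F\in\mathcal{C}\}$ on ground set $V\setminus\{v\}$. $\mathcal{A}_{\mathcal{C},\mathbf{d}}$ is the $0/1$ matrix with columns indexed by $\mathbf{i}\in\prod_{u\in V}[d_u]$ and rows indexed by pairs $(F,\mathbf{e})$, $F$ a facet, $\mathbf{e}\in\prod_{u\in F}[d_u]$; entry $1$ iff $\mathbf{e}=\mathbf{i}|_F$. An integer matrix is unimodular if every circuit (nonzero integer kernel vector with coprime entries and inclusion-minimal support among nonzero kernel vectors) has all entries in $\{0,\pm1\}$. *)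

theory Defs
  imports "HOL-Library.FuncSet"
begin

definition simplicial_complex :: "'a set \<Rightarrow> 'a set set \<Rightarrow> bool" where
  "simplicial_complex V C \<longleftrightarrow> finite V \<and> (\<forall>F\<in>C. F \<subseteq> V) \<and> (\<forall>F\<in>C. \<forall>G. G \<subseteq> F \<longrightarrow> G \<in> C)"

definition facets :: "'a set set \<Rightarrow> 'a set set" where
  "facets C = {F \<in> C. \<not> (\<exists>G\<in>C. F \<subset> G)}"

definition link :: "'a \<Rightarrow> 'a set set \<Rightarrow> 'a set set" where
  "link v C = {F - {v} | F. v \<in> F \<and> F \<in> C}"

definition int_kernel_vec :: "'r set \<Rightarrow> 'c set \<Rightarrow> ('r \<Rightarrow> 'c \<Rightarrow> int) \<Rightarrow> ('c \<Rightarrow> int) \<Rightarrow> bool" where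
  "int_kernel_vec R K M z \<longleftrightarrow> (\<forall>c. c \<notin> K \<longrightarrow> z c = 0) \<and> (\<forall>r\<in>R. (\<Sum>c\<in>K. M r c * z c) = 0)"

definition supp :: "('c \<Rightarrow> int) \<Rightarrow> 'c set" where
  "supp z = {c. z c \<noteq> 0}"

definition circuit :: "'r set \<Rightarrow> 'c set \<Rightarrow> ('r \<Rightarrow> 'c \<Rightarrow> int) \<Rightarrow> ('c \<Rightarrow> int) \<Rightarrow> bool" where
  "circuit R K M z \<longleftrightarrow> int_kernel_vec R K M z \<and> z \<noteq> (\<lambda>_. 0) \<and> Gcd (z ` K) = 1 \<and>
     \<not> (\<exists>y. int_kernel_vec R K M y \<and> y \<noteq> (\<lambda>_. 0) \<and> supp y \<subset> supp z)"

definition unimodular :: "'r set \<Rightarrow> 'c set \<Rightarrow> ('r \<Rightarrow> 'c \<Rightarrow> int) \<Rightarrow> bool" where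
  "unimodular R K M \<longleftrightarrow> (\<forall>z. circuit R K M z \<longrightarrow> (\<forall>c. z c \<in> {-1, 0, 1}))"

text \<open>The matrix A_{C,d}; [d_u] is rendered as {0..<d u}. Columns: extensional functions on V.\<close>
definition A_cols :: "'a set \<Rightarrow> ('a \<Rightarrow> nat) \<Rightarrow> ('a \<Rightarrow> nat) set" where
  "A_cols V d = (\<Pi>\<^sub>E u\<in>V. {..<d u})"

definition A_rows :: "'a set set \<Rightarrow> ('a \<Rightarrow> nat) \<Rightarrow> ('a set \<times> ('a \<Rightarrow> nat)) set" where
  "A_rows C d = {(F, e). F \<in> facets C \<and> e \<in> (\<Pi>\<^sub>E u\<in>F. {..<d u})}"

definition A_entry :: "('a set \<times> ('a \<Rightarrow> nat)) \<Rightarrow> ('a \<Rightarrow> nat) \<Rightarrow> int" where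
  "A_entry r i = (if snd r = restrict i (fst r) then 1 else 0)"

definition A_unimodular :: "'a set \<Rightarrow> 'a set set \<Rightarrow> ('a \<Rightarrow> nat) \<Rightarrow> bool" where
  "A_unimodular V C d \<longleftrightarrow> unimodular (A_rows C d) (A_cols V d) A_entry"

end

theory Submission imports Defs begin

text \<open>A circuit z of the link matrix is lifted to a circuit s \<otimes> z of A_{C,d}, where s is indexed by
  the values of the coordinate v and s 0 = 1; then z is a slice of that circuit, so the unimodularity
  of A_{C,d} bounds its entries. A row of A_{C,d} through v restricts to a row of the link matrix,
  while a row avoiding v only sees the total weight of s. So take s = e_0 if z annihilates the rows
  avoiding v; otherwise every kernel vector t \<otimes> z has total weight of t zero, and take
  s = e_0 - e_1 (possible as d v \<ge> 2). Minimality: by minimality of z, every slice of a kernel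
  vector supported inside s \<otimes> z is a multiple of z, so that vector is itself some t \<otimes> z,
  and the constraint on t leaves no support strictly between empty and that of s.\<close>

definition A_row_dot :: "('a \<Rightarrow> nat) set \<Rightarrow> 'a set \<times> ('a \<Rightarrow> nat) \<Rightarrow> (('a \<Rightarrow> nat) \<Rightarrow> int) \<Rightarrow> int" where
  "A_row_dot K r y = (\<Sum>i\<in>K. A_entry r i * y i)"

lemma int_kernel_vec_A_entry_iff:
  "int_kernel_vec R K A_entry y \<longleftrightarrow> (\<forall>i. i \<notin> K \<longrightarrow> y i = 0) \<and> (\<forall>r\<in>R. A_row_dot K r y = 0)"
  by (simp add: int_kernel_vec_def A_row_dot_def)

lemma A_rows_iff: "(F, e) \<in> A_rows C d \<longleftrightarrow> F \<in> facets C \<and> e \<in> (\<Pi>\<^sub>E u\<in>F. {..<d u})"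
  by (simp add: A_rows_def)

lemma sum_A_cols_split:
  assumes "v \<in> V"
  shows "(\<Sum>i\<in>A_cols V d. f i) = (\<Sum>k<d v. \<Sum>j\<in>A_cols (V-{v}) d. f (j(v:=k)))"
proof -
  have V: "V = insert v (V-{v})" using assms by blast
  have "A_cols V d = (\<lambda>(k, j). j(v := k)) ` ({..<d v} \<times> A_cols (V-{v}) d)"
    unfolding A_cols_def by (subst V, subst PiE_insert_eq) simp
  moreover have "inj_on (\<lambda>(k, j). j(v := k)) ({..<d v} \<times> A_cols (V-{v}) d)"
    unfolding A_cols_def using inj_combinator[of v "V-{v}" "\<lambda>u. {..<d u}"] by simp
  ultimately show ?thesis
    by (simp add: sum.reindex sum.cartesian_product split_def)
qed

lemma fun_upd_in_A_cols:
  assumes "j \<in> A_cols (V-{v}) d" "k < d v" "v \<in> V"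
  shows "j(v:=k) \<in> A_cols V d" "restrict (j(v:=k)) (V-{v}) = j"
  using assms by (auto simp: A_cols_def PiE_def extensional_def fun_eq_iff)

lemma restrict_in_A_cols:
  assumes "i \<in> A_cols V d"
  shows "restrict i (V-{v}) \<in> A_cols (V-{v}) d" "(restrict i (V-{v}))(v := i v) = i"
  using assms by (auto simp: A_cols_def PiE_def extensional_def fun_eq_iff)

lemma A_cols_apply_less: "i \<in> A_cols V d \<Longrightarrow> v \<in> V \<Longrightarrow> i v < d v"
  by (auto simp: A_cols_def)

lemma A_entry_fun_upd_mem:
  assumes "v \<in> F" "e \<in> (\<Pi>\<^sub>E u\<in>F. {..<d u})"
  shows "A_entry (F, e) (j(v:=k)) = (if k = e v then A_entry (F-{v}, restrict e (F-{v})) j else 0)"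
proof -
  have "e \<in> extensional F" using assms(2) by (simp add: PiE_def)
  then have "restrict (j(v:=k)) F = e \<longleftrightarrow> k = e v \<and> restrict j (F-{v}) = restrict e (F-{v})"
    using assms(1) by (auto simp: fun_eq_iff restrict_def extensional_def)
  then show ?thesis by (auto simp: A_entry_def)
qed

lemma A_entry_fun_upd_not_mem: "v \<notin> F \<Longrightarrow> A_entry (F, e) (j(v:=k)) = A_entry (F, e) j"
  by (simp add: A_entry_def restrict_def fun_eq_iff)

lemma facets_link_insert:
  assumes "G \<in> facets (link v C)"
  shows "v \<notin> G" "insert v G \<in> facets C"
proof -
  from assms obtain F where F: "G = F - {v}" "v \<in> F" "F \<in> C" "\<not> (\<exists>H\<in>link v C. G \<subset> H)"
    by (auto simp: facets_def link_def)
  show "v \<notin> G" using F by auto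
  have "\<not> F \<subset> H" if "H \<in> C" for H
  proof
    assume "F \<subset> H"
    then have "H - {v} \<in> link v C" "G \<subset> H - {v}" using F that by (auto simp: link_def)
    then show False using F by auto
  qed
  moreover have "insert v G = F" using F by auto
  ultimately show "insert v G \<in> facets C" using F by (auto simp: facets_def)
qed

lemma facets_link_Diff:
  assumes "F \<in> facets C" "v \<in> F"
  shows "F - {v} \<in> facets (link v C)"
proof -
  have "\<not> F - {v} \<subset> H" if "H \<in> link v C" for H
  proof
    assume "F - {v} \<subset> H"
    with that obtain H' where "H' \<in> C" "F \<subset> H'" using assms(2) by (auto simp: link_def)
    then show False using assms(1) by (auto simp: facets_def)
  qed
  moreover have "F - {v} \<in> link v C" using assms by (auto simp: facets_def link_def)
  ultimately show ?thesis by (auto simp: facets_def)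
qed

definition A_slice :: "'a set \<Rightarrow> ('a \<Rightarrow> nat) \<Rightarrow> 'a \<Rightarrow> (('a \<Rightarrow> nat) \<Rightarrow> int) \<Rightarrow> nat \<Rightarrow> ('a \<Rightarrow> nat) \<Rightarrow> int" where
  "A_slice V d v y k = (\<lambda>j. if j \<in> A_cols (V-{v}) d then y (j(v:=k)) else 0)"

text \<open>A_lift V d v s w is the tensor product s \<otimes> w, the coordinate v carrying s.\<close>

definition A_lift :: "'a set \<Rightarrow> ('a \<Rightarrow> nat) \<Rightarrow> 'a \<Rightarrow> (nat \<Rightarrow> int) \<Rightarrow> (('a \<Rightarrow> nat) \<Rightarrow> int) \<Rightarrow> ('a \<Rightarrow> nat) \<Rightarrow> int" where
  "A_lift V d v s w = (\<lambda>i. if i \<in> A_cols V d then s (i v) * w (restrict i (V-{v})) else 0)"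

lemma A_lift_fun_upd:
  assumes "v \<in> V" "j \<in> A_cols (V-{v}) d" "k < d v"
  shows "A_lift V d v s w (j(v:=k)) = s k * w j"
  using fun_upd_in_A_cols[OF assms(2,3,1)] by (simp add: A_lift_def)

lemma supp_A_lift:
  "supp (A_lift V d v s w) = {i \<in> A_cols V d. s (i v) \<noteq> 0 \<and> w (restrict i (V-{v})) \<noteq> 0}"
  by (auto simp: supp_def A_lift_def)

lemma A_slice_A_lift:
  assumes "v \<in> V" "k < d v" "\<And>j. j \<notin> A_cols (V-{v}) d \<Longrightarrow> w j = 0"
  shows "A_slice V d v (A_lift V d v s w) k = (\<lambda>j. s k * w j)"
  using assms by (auto simp: A_slice_def A_lift_fun_upd)

lemma eq_A_slice:
  assumes "i \<in> A_cols V d"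
  shows "y i = A_slice V d v y (i v) (restrict i (V-{v}))"
  using restrict_in_A_cols[OF assms, of v] by (simp add: A_slice_def)

lemma A_row_dot_mem:
  assumes "v \<in> V" "v \<in> F" "e \<in> (\<Pi>\<^sub>E u\<in>F. {..<d u})"
  shows "A_row_dot (A_cols V d) (F, e) y
       = A_row_dot (A_cols (V-{v}) d) (F-{v}, restrict e (F-{v})) (A_slice V d v y (e v))"
proof -
  let ?S = "\<lambda>k. \<Sum>j\<in>A_cols (V-{v}) d. A_entry (F-{v}, restrict e (F-{v})) j * y (j(v:=k))"
  have "A_row_dot (A_cols V d) (F, e) y = (\<Sum>k<d v. if k = e v then ?S k else 0)"
    unfolding A_row_dot_def sum_A_cols_split[OF assms(1)]
    by (intro sum.cong refl) (simp add: A_entry_fun_upd_mem[OF assms(2,3)])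
  also have "\<dots> = ?S (e v)"
    using assms(2,3) by auto
  finally show ?thesis
    by (simp add: A_row_dot_def A_slice_def)
qed

lemma A_row_dot_not_mem:
  assumes "v \<in> V" "v \<notin> F"
  shows "A_row_dot (A_cols V d) (F, e) y
       = (\<Sum>k<d v. A_row_dot (A_cols (V-{v}) d) (F, e) (A_slice V d v y k))"
  unfolding A_row_dot_def sum_A_cols_split[OF assms(1)]
  by (intro sum.cong refl) (simp add: A_entry_fun_upd_not_mem[OF assms(2)] A_slice_def)

lemma A_row_dot_scale: "A_row_dot K r (\<lambda>j. a * w j) = a * A_row_dot K r w"
  by (simp add: A_row_dot_def sum_distrib_left algebra_simps)

lemma A_slice_in_kernel:
  assumes "v \<in> V" "int_kernel_vec (A_rows C d) (A_cols V d) A_entry y" "k < d v"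
  shows "int_kernel_vec (A_rows (link v C) d) (A_cols (V-{v}) d) A_entry (A_slice V d v y k)"
  unfolding int_kernel_vec_A_entry_iff
proof (intro conjI allI impI ballI)
  fix j assume "j \<notin> A_cols (V-{v}) d"
  then show "A_slice V d v y k j = 0" by (simp add: A_slice_def)
next
  fix r assume "r \<in> A_rows (link v C) d"
  then obtain G e' where r: "r = (G, e')" "G \<in> facets (link v C)" "e' \<in> (\<Pi>\<^sub>E u\<in>G. {..<d u})"
    by (cases r) (auto simp: A_rows_iff)
  have vG: "v \<notin> G" and F: "insert v G \<in> facets C" using facets_link_insert[OF r(2)] by auto
  define e where "e = e'(v:=k)"
  have e: "e \<in> (\<Pi>\<^sub>E u\<in>insert v G. {..<d u})" using r(3) assms(3) by (auto simp: e_def PiE_def extensional_def)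
  have "restrict e (insert v G - {v}) = e'" "insert v G - {v} = G"
    using r(3) vG by (auto simp: e_def PiE_def extensional_def restrict_def fun_eq_iff)
  moreover have "A_row_dot (A_cols V d) (insert v G, e) y = 0"
    using assms(2) F e by (simp add: int_kernel_vec_A_entry_iff A_rows_iff)
  ultimately show "A_row_dot (A_cols (V-{v}) d) r (A_slice V d v y k) = 0"
    using A_row_dot_mem[OF assms(1) insertI1 e, of y] r(1) by (simp add: e_def)
qed

lemma A_lift_in_kernel_iff:
  assumes v: "v \<in> V" and w: "int_kernel_vec (A_rows (link v C) d) (A_cols (V-{v}) d) A_entry w"
  shows "int_kernel_vec (A_rows C d) (A_cols V d) A_entry (A_lift V d v s w) \<longleftrightarrow>
    (\<forall>(F, e)\<in>A_rows C d. v \<notin> F \<longrightarrow> (\<Sum>k<d v. s k) * A_row_dot (A_cols (V-{v}) d) (F, e) w = 0)"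
proof -
  have w0: "\<And>j. j \<notin> A_cols (V-{v}) d \<Longrightarrow> w j = 0"
    using w by (simp add: int_kernel_vec_A_entry_iff)
  have mem: "A_row_dot (A_cols V d) (F, e) (A_lift V d v s w) = 0"
    if "(F, e) \<in> A_rows C d" "v \<in> F" for F e
  proof -
    have F: "F \<in> facets C" and e: "e \<in> (\<Pi>\<^sub>E u\<in>F. {..<d u})" using that(1) by (auto simp: A_rows_iff)
    then have "(F-{v}, restrict e (F-{v})) \<in> A_rows (link v C) d"
      using facets_link_Diff[OF F that(2)] by (auto simp: A_rows_iff PiE_def extensional_def)
    then have "A_row_dot (A_cols (V-{v}) d) (F-{v}, restrict e (F-{v})) w = 0"
      using w by (simp add: int_kernel_vec_A_entry_iff)
    moreover have "e v < d v" using that(2) e by auto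
    ultimately show ?thesis
      by (simp add: A_row_dot_mem[OF v that(2) e] A_slice_A_lift[OF v _ w0] A_row_dot_scale)
  qed
  have not_mem: "A_row_dot (A_cols V d) (F, e) (A_lift V d v s w)
      = (\<Sum>k<d v. s k) * A_row_dot (A_cols (V-{v}) d) (F, e) w" if "v \<notin> F" for F e
    by (simp add: A_row_dot_not_mem[OF v that] A_slice_A_lift[OF v _ w0] A_row_dot_scale sum_distrib_right)
  have "\<forall>i. i \<notin> A_cols V d \<longrightarrow> A_lift V d v s w i = 0"
    by (simp add: A_lift_def)
  moreover have "(\<forall>r\<in>A_rows C d. A_row_dot (A_cols V d) r (A_lift V d v s w) = 0) \<longleftrightarrow>
    (\<forall>(F, e)\<in>A_rows C d. v \<notin> F \<longrightarrow> (\<Sum>k<d v. s k) * A_row_dot (A_cols (V-{v}) d) (F, e) w = 0)"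
  proof (intro iffI ballI; clarify)
    fix F e assume "\<forall>r\<in>A_rows C d. A_row_dot (A_cols V d) r (A_lift V d v s w) = 0"
      "(F, e) \<in> A_rows C d" "v \<notin> F"
    then show "(\<Sum>k<d v. s k) * A_row_dot (A_cols (V-{v}) d) (F, e) w = 0" using not_mem by metis
  next
    fix F e assume "\<forall>(F, e)\<in>A_rows C d. v \<notin> F \<longrightarrow> (\<Sum>k<d v. s k) * A_row_dot (A_cols (V-{v}) d) (F, e) w = 0"
      "(F, e) \<in> A_rows C d"
    then show "A_row_dot (A_cols V d) (F, e) (A_lift V d v s w) = 0"
      using mem not_mem by (cases "v \<in> F") auto
  qed
  ultimately show ?thesis
    unfolding int_kernel_vec_A_entry_iff by blast
qed

lemma int_kernel_vec_diff:
  assumes "int_kernel_vec R K M y" "int_kernel_vec R K M z"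
  shows "int_kernel_vec R K M (\<lambda>x. a * y x - b * z x)"
  using assms by (auto simp: int_kernel_vec_def algebra_simps sum_subtractf sum_distrib_left[symmetric])

lemma int_kernel_vec_scale:
  "int_kernel_vec R K M y \<Longrightarrow> int_kernel_vec R K M (\<lambda>x. a * y x)"
  using int_kernel_vec_diff[of R K M y y a 0] by simp

lemma circuit_proportional:
  assumes "circuit R K M z" "int_kernel_vec R K M y" "supp y \<subseteq> supp z" "z c \<noteq> 0"
  shows "z c * y x = y c * z x"
proof -
  let ?w = "\<lambda>x. z c * y x - y c * z x"
  have "int_kernel_vec R K M ?w"
    using assms(1,2) by (intro int_kernel_vec_diff) (simp_all add: circuit_def)
  moreover have "supp ?w \<subseteq> supp z" "c \<in> supp z - supp ?w"
    using assms(3,4) by (auto simp: supp_def)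
  then have "supp ?w \<subset> supp z" by blast
  ultimately have "?w = (\<lambda>_. 0)" using assms(1) unfolding circuit_def by blast
  then show ?thesis by (simp add: fun_eq_iff)
qed

lemma supp_A_slice_subset:
  assumes "v \<in> V" "supp y \<subseteq> supp (A_lift V d v s w)" "k < d v"
  shows "supp (A_slice V d v y k) \<subseteq> supp w"
proof
  fix j assume "j \<in> supp (A_slice V d v y k)"
  then have j: "j \<in> A_cols (V-{v}) d" "j(v:=k) \<in> supp y"
    by (auto simp: supp_def A_slice_def split: if_splits)
  then have "w (restrict (j(v:=k)) (V-{v})) \<noteq> 0" using assms(2) by (auto simp: supp_A_lift)
  then show "j \<in> supp w" by (simp add: fun_upd_in_A_cols(2)[OF j(1) assms(3,1)] supp_def)
qed

lemma kernel_vec_below_A_lift: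
  assumes v: "v \<in> V" and z: "circuit (A_rows (link v C) d) (A_cols (V-{v}) d) A_entry z"
    and c: "z c \<noteq> 0" and y: "int_kernel_vec (A_rows C d) (A_cols V d) A_entry y"
    and sy: "supp y \<subseteq> supp (A_lift V d v s z)"
  shows "(\<lambda>i. z c * y i) = A_lift V d v (\<lambda>k. A_slice V d v y k c) z"
proof
  fix i show "z c * y i = A_lift V d v (\<lambda>k. A_slice V d v y k c) z i"
  proof (cases "i \<in> A_cols V d")
    case True
    have k: "i v < d v" using A_cols_apply_less[OF True v] .
    have "z c * A_slice V d v y (i v) (restrict i (V-{v}))
        = A_slice V d v y (i v) c * z (restrict i (V-{v}))"
      by (rule circuit_proportional[OF z A_slice_in_kernel[OF v y k] supp_A_slice_subset[OF v sy k]]) (rule c)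
    then show ?thesis using True by (simp add: eq_A_slice[OF True, of y v] A_lift_def)
  next
    case False
    then have "i \<notin> supp y" using sy by (auto simp: supp_A_lift)
    then show ?thesis using False by (simp add: supp_def A_lift_def)
  qed
qed

lemma kernel_vec_below_A_lift_supp_eq:
  assumes v: "v \<in> V"
    and z: "circuit (A_rows (link v C) d) (A_cols (V-{v}) d) A_entry z"
    and minimal: "\<And>t. int_kernel_vec (A_rows C d) (A_cols V d) A_entry (A_lift V d v t z) \<Longrightarrow>
      {k. k < d v \<and> t k \<noteq> 0} \<subseteq> {k. k < d v \<and> s k \<noteq> 0} \<Longrightarrow>
      {k. k < d v \<and> t k \<noteq> 0} \<in> {{}, {k. k < d v \<and> s k \<noteq> 0}}"
    and y: "int_kernel_vec (A_rows C d) (A_cols V d) A_entry y" and y0: "y \<noteq> (\<lambda>_. 0)"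
    and sy: "supp y \<subseteq> supp (A_lift V d v s z)"
  shows "supp y = supp (A_lift V d v s z)"
proof -
  obtain c where c: "z c \<noteq> 0" using z by (auto simp: circuit_def fun_eq_iff)
  define t where "t k = A_slice V d v y k c" for k
  have yt: "(\<lambda>i. z c * y i) = A_lift V d v t z"
    unfolding t_def by (rule kernel_vec_below_A_lift[OF v z c y sy])
  have "supp y = supp (\<lambda>i. z c * y i)" using c by (simp add: supp_def)
  then have supp_y: "supp y = supp (A_lift V d v t z)" by (simp only: yt)
  have "int_kernel_vec (A_rows C d) (A_cols V d) A_entry (A_lift V d v t z)"
    unfolding yt[symmetric] by (rule int_kernel_vec_scale[OF y])
  moreover have "s k \<noteq> 0" if "t k \<noteq> 0" for k
  proof -
    have "c(v:=k) \<in> supp y"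
      using that by (auto simp: t_def A_slice_def supp_def split: if_splits)
    then show ?thesis using sy by (auto simp: supp_A_lift)
  qed
  then have "{k. k < d v \<and> t k \<noteq> 0} \<subseteq> {k. k < d v \<and> s k \<noteq> 0}" by blast
  ultimately have "{k. k < d v \<and> t k \<noteq> 0} \<in> {{}, {k. k < d v \<and> s k \<noteq> 0}}"
    by (rule minimal)
  then consider "\<forall>k<d v. t k = 0" | "\<forall>k<d v. t k \<noteq> 0 \<longleftrightarrow> s k \<noteq> 0"
    by (auto simp: set_eq_iff)
  then show ?thesis
  proof cases
    case 1
    then have "supp y = {}"
      unfolding supp_y supp_A_lift using A_cols_apply_less[OF _ v] by blast
    then show ?thesis using y0 by (auto simp: supp_def)
  next
    case 2
    then show ?thesis
      unfolding supp_y supp_A_lift using A_cols_apply_less[OF _ v] by blast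
  qed
qed

lemma A_lift_circuitI:
  assumes v: "v \<in> V" and dv: "0 < d v" and s0: "s 0 = 1"
    and z: "circuit (A_rows (link v C) d) (A_cols (V-{v}) d) A_entry z"
    and ker: "int_kernel_vec (A_rows C d) (A_cols V d) A_entry (A_lift V d v s z)"
    and minimal: "\<And>t. int_kernel_vec (A_rows C d) (A_cols V d) A_entry (A_lift V d v t z) \<Longrightarrow>
      {k. k < d v \<and> t k \<noteq> 0} \<subseteq> {k. k < d v \<and> s k \<noteq> 0} \<Longrightarrow>
      {k. k < d v \<and> t k \<noteq> 0} \<in> {{}, {k. k < d v \<and> s k \<noteq> 0}}"
  shows "circuit (A_rows C d) (A_cols V d) A_entry (A_lift V d v s z)"
  unfolding circuit_def
proof (intro conjI notI)
  have kz: "int_kernel_vec (A_rows (link v C) d) (A_cols (V-{v}) d) A_entry z"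
    and gz: "Gcd (z ` A_cols (V-{v}) d) = 1"
    using z by (auto simp: circuit_def)
  have lift0: "A_lift V d v s z (j(v:=0)) = z j" if "j \<in> A_cols (V-{v}) d" for j
    using A_lift_fun_upd[OF v that dv] s0 by simp
  obtain c where c: "z c \<noteq> 0" using z by (auto simp: circuit_def fun_eq_iff)
  then have "c \<in> A_cols (V-{v}) d" using kz by (auto simp: int_kernel_vec_def)
  then show "A_lift V d v s z = (\<lambda>_. 0) \<Longrightarrow> False"
    using lift0 c by force
  show "int_kernel_vec (A_rows C d) (A_cols V d) A_entry (A_lift V d v s z)" by (rule ker)
  let ?g = "Gcd (A_lift V d v s z ` A_cols V d)"
  have "?g dvd z j" if j: "j \<in> A_cols (V-{v}) d" for j
    using Gcd_dvd[OF imageI[OF fun_upd_in_A_cols(1)[OF j dv v]], of "A_lift V d v s z"] lift0[OF j]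
    by simp
  then have "?g dvd 1" unfolding gz[symmetric] by (auto intro: Gcd_greatest)
  then show "?g = 1" by simp
next
  assume "\<exists>y. int_kernel_vec (A_rows C d) (A_cols V d) A_entry y \<and> y \<noteq> (\<lambda>_. 0) \<and>
    supp y \<subset> supp (A_lift V d v s z)"
  then show False
    using kernel_vec_below_A_lift_supp_eq[OF v z minimal] by blast
qed

lemma sum_lessThan_supported_0_1:
  fixes t :: "nat \<Rightarrow> 'b::comm_monoid_add"
  assumes "1 < n" "\<And>k. k < n \<Longrightarrow> t k \<noteq> 0 \<Longrightarrow> k \<in> {0, 1}"
  shows "(\<Sum>k<n. t k) = t 0 + t 1"
proof -
  have "(\<Sum>k<n. t k) = (\<Sum>k\<in>{0, 1}. t k)"
    using assms by (intro sum.mono_neutral_right) auto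
  then show ?thesis by simp
qed

lemma exists_A_lift_circuit:
  assumes v: "v \<in> V" and dv: "2 \<le> d v"
    and z: "circuit (A_rows (link v C) d) (A_cols (V-{v}) d) A_entry z"
  shows "\<exists>s. s 0 = 1 \<and> circuit (A_rows C d) (A_cols V d) A_entry (A_lift V d v s z)"
proof -
  have kz: "int_kernel_vec (A_rows (link v C) d) (A_cols (V-{v}) d) A_entry z"
    using z by (simp add: circuit_def)
  note lift_kernel = A_lift_in_kernel_iff[OF v kz]
  show ?thesis
  proof (cases "\<forall>(F, e)\<in>A_rows C d. v \<notin> F \<longrightarrow> A_row_dot (A_cols (V-{v}) d) (F, e) z = 0")
    case True
    define s :: "nat \<Rightarrow> int" where "s k = of_bool (k = 0)" for k
    have "{k. k < d v \<and> s k \<noteq> 0} = {0}" using dv by (auto simp: s_def)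
    then have "circuit (A_rows C d) (A_cols V d) A_entry (A_lift V d v s z)"
      using True dv by (intro A_lift_circuitI[OF v _ _ z]) (auto simp: lift_kernel s_def)
    moreover have "s 0 = 1" by (simp add: s_def)
    ultimately show ?thesis by blast
  next
    case False
    then obtain F e where "(F, e) \<in> A_rows C d" "v \<notin> F" "A_row_dot (A_cols (V-{v}) d) (F, e) z \<noteq> 0"
      by blast
    then have balanced: "(\<Sum>k<d v. t k) = 0"
      if "int_kernel_vec (A_rows C d) (A_cols V d) A_entry (A_lift V d v t z)" for t
      using that by (auto simp: lift_kernel)
    define s :: "nat \<Rightarrow> int" where "s k = of_bool (k = 0) - of_bool (k = 1)" for k
    have support_s: "{k. k < d v \<and> s k \<noteq> 0} = {0, 1}" using dv by (auto simp: s_def)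
    have "(\<Sum>k<d v. s k) = 0"
      using dv by (subst sum_lessThan_supported_0_1) (auto simp: s_def)
    then have ker: "int_kernel_vec (A_rows C d) (A_cols V d) A_entry (A_lift V d v s z)"
      by (simp add: lift_kernel)
    have minimal: "{k. k < d v \<and> t k \<noteq> 0} \<in> {{}, {k. k < d v \<and> s k \<noteq> 0}}"
      if "int_kernel_vec (A_rows C d) (A_cols V d) A_entry (A_lift V d v t z)"
        and "{k. k < d v \<and> t k \<noteq> 0} \<subseteq> {k. k < d v \<and> s k \<noteq> 0}" for t
    proof -
      have "t 0 + t 1 = 0"
        using balanced[OF that(1)] sum_lessThan_supported_0_1[of "d v" t] that(2) dv
        unfolding support_s by auto
      then show ?thesis using that(2) dv unfolding support_s by auto
    qed
    have "circuit (A_rows C d) (A_cols V d) A_entry (A_lift V d v s z)"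
      using dv by (intro A_lift_circuitI[OF v _ _ z ker minimal]) (auto simp: s_def)
    moreover have "s 0 = 1" by (simp add: s_def)
    ultimately show ?thesis by blast
  qed
qed

theorem corollary7p4:
  fixes V :: "'a set" and C :: "'a set set" and d :: "'a \<Rightarrow> nat" and v :: 'a
  assumes "simplicial_complex V C"
    and "\<forall>u\<in>V. d u \<ge> 2"
    and "A_unimodular V C d"
    and "{v} \<in> C"
  shows "A_unimodular (V - {v}) (link v C) d"
  unfolding A_unimodular_def unimodular_def
proof (intro allI impI)
  fix z x assume z: "circuit (A_rows (link v C) d) (A_cols (V-{v}) d) A_entry z"
  have v: "v \<in> V" using assms(1,4) by (auto simp: simplicial_complex_def)
  then have dv: "2 \<le> d v" using assms(2) by blast
  obtain s where s0: "s 0 = 1" and "circuit (A_rows C d) (A_cols V d) A_entry (A_lift V d v s z)"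
    using exists_A_lift_circuit[OF v dv z] by blast
  then have unit: "A_lift V d v s z i \<in> {-1, 0, 1}" for i
    using assms(3) by (simp add: A_unimodular_def unimodular_def)
  show "z x \<in> {-1, 0, 1}"
  proof (cases "x \<in> A_cols (V-{v}) d")
    case True
    then show ?thesis using unit[of "x(v:=0)"] A_lift_fun_upd[OF v True, of 0] dv s0 by simp
  next
    case False
    then show ?thesis using z by (simp add: circuit_def int_kernel_vec_def)
  qed
qed

end
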